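(* Let $A_1,\dots,A_m\in\mathbb{S}^n$, $b\in\mathbb{R}^m$, $C\in\mathbb{S}^n$, and let $p$ be such that Assumption 1 holds, with associated dimension $m'$. Let $Y\in\mathcal{M}_p$ be a second-order critical point of (P) and $X=YY^\top$ (so $X$ lies in the relative interior of the face $\mathcal{F}_X$). If $\operatorname{rank}(Y)=p$, then $S=S(Y)$ has at most $\left\lfloor\frac{\dim\mathcal{F}_X-\Delta}{p}\right\rfloor$ negative eigenvalues, where $\Delta=\frac{p(p+1)}{2}-m'$. In particular, if $\dim\mathcal{F}_X<\Delta+p$, then $S$ is positive semidefinite and $X$ is globally optimal for (SDP) and $Y$ is globally optimal for (P).
   Context: $\mathbb{S}^n$: real symmetric $n\times n$ matrices; $\langle U,V\rangle=\operatorname{tr}(U^\top V)$. $\mathcal{A}(X)_i=\langle A_i,X\rangle$, $\mathcal{A}^*(\nu)=\sum_i\nu_iA_i$. $\mathcal{C}=\{X\in\mathbb{S}^n:\mathcal{A}(X)=b,\ X\succeq0\}$ (non-empty); (SDP): minimize $\langle C,X\rangle$ over $\mathcal{C}$. $\mathcal{M}_p=\{Y\in\mathbb{R}^{n\times p}:\mathcal{A}(YY^\top)=b\}$; (P): minimize $\langle CY,Y\rangle$ over $\mathcal{M}_p$. Assumption 1 (for $p$ with $\mathcal{M}_p\ne\emptyset$): either (a) $A_1Y,\dots,A_mY$ are linearly independent for all $Y\in\mathcal{M}_p$, or (b) $\operatorname{span}\{A_1Y,\dots,A_mY\}$ has constant dimension for all $Y$ in an open neighborhood of $\mathcal{M}_p$;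 $m'$ is the dimension of this span for $Y\in\mathcal{M}_p$. For $Y\in\mathcal{M}_p$: $T_Y=\{\dot Y:\langle A_iY,\dot Y\rangle=0\ \forall i\}$; $G_{ij}=\langle A_iY,A_jY\rangle$, $\mu=G^\dagger\mathcal{A}(CYY^\top)$, $S(Y)=C-\mathcal{A}^*(\mu)$. $Y$ is second-order critical if $S(Y)Y=0$ and $\langle\dot Y,S(Y)\dot Y\rangle\ge0$ for all $\dot Y\in T_Y$. A face of convex $\mathcal{C}$ is a convex subset $\mathcal{F}$ such that every closed segment in $\mathcal{C}$ with a relative interior point in $\mathcal{F}$ has both endpoints in $\mathcal{F}$; $\mathcal{F}_X$ is the unique face containing $X$ in its relative interior; its dimension is that of its affine hull. *)

theory Defs
  imports "HOL-Analysis.Analysis" "HOL-Computational_Algebra.Polynomial"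
begin

definition frob :: "real^'c^'r \<Rightarrow> real^'c^'r \<Rightarrow> real" where
  "frob U V = (\<Sum>i\<in>UNIV. \<Sum>j\<in>UNIV. U$i$j * V$i$j)"

definition symmetric_mat :: "real^'n^'n \<Rightarrow> bool" where
  "symmetric_mat M \<longleftrightarrow> transpose M = M"

definition psd :: "real^'n^'n \<Rightarrow> bool" where
  "psd M \<longleftrightarrow> symmetric_mat M \<and> (\<forall>x. 0 \<le> x \<bullet> (M *v x))"

definition opA :: "('m \<Rightarrow> real^'n^'n) \<Rightarrow> real^'n^'n \<Rightarrow> real^'m" where
  "opA A X = (\<chi> i. frob (A i) X)"

definition opA_adj :: "('m::finite \<Rightarrow> real^'n^'n) \<Rightarrow> real^'m \<Rightarrow> real^'n^'n" where
  "opA_adj A \<nu> = (\<Sum>i\<in>UNIV. (\<nu>$i) *\<^sub>R A i)"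

definition sdp_feasible :: "('m \<Rightarrow> real^'n^'n) \<Rightarrow> real^'m \<Rightarrow> (real^'n^'n) set" where
  "sdp_feasible A b = {X. symmetric_mat X \<and> opA A X = b \<and> psd X}"

text \<open>The manifold M_p (p = CARD('p)).\<close>
definition Mp :: "('m \<Rightarrow> real^'n^'n) \<Rightarrow> real^'m \<Rightarrow> (real^'p^'n) set" where
  "Mp A b = {Y. opA A (Y ** transpose Y) = b}"

definition span_AY :: "('m \<Rightarrow> real^'n^'n) \<Rightarrow> real^'p^'n \<Rightarrow> (real^'p^'n) set" where
  "span_AY A Y = span (range (\<lambda>i. A i ** Y))"

text \<open>Assumption 1, for the given p (encoded by the type 'p).\<close>
definition assumption1 :: "('m::finite \<Rightarrow> real^'n^'n) \<Rightarrow> real^'m \<Rightarrow> 'p::finite itself \<Rightarrow> bool" where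
  "assumption1 A b _ \<longleftrightarrow>
     (\<forall>Y\<in>(Mp A b :: (real^'p^'n) set).
        \<forall>c::'m \<Rightarrow> real. (\<Sum>i\<in>UNIV. c i *\<^sub>R (A i ** Y)) = 0 \<longrightarrow> (\<forall>i. c i = 0))
   \<or> (\<exists>U::(real^'p^'n) set. open U \<and> Mp A b \<subseteq> U \<and>
        (\<exists>d. \<forall>Y\<in>U. dim (span_AY A Y) = d))"

definition tangent_space :: "('m \<Rightarrow> real^'n^'n) \<Rightarrow> real^'p^'n \<Rightarrow> (real^'p^'n) set" where
  "tangent_space A Y = {Yd. \<forall>i. frob (A i ** Y) Yd = 0}"

definition pinv :: "real^'m^'m \<Rightarrow> real^'m^'m" where
  "pinv G = (THE P. G ** P ** G = G \<and> P ** G ** P = P \<and>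
                    transpose (G ** P) = G ** P \<and> transpose (P ** G) = P ** G)"

definition gram :: "('m \<Rightarrow> real^'n^'n) \<Rightarrow> real^'p^'n \<Rightarrow> real^'m^'m" where
  "gram A Y = (\<chi> i j. frob (A i ** Y) (A j ** Y))"

definition mult_mu :: "('m::finite \<Rightarrow> real^'n^'n) \<Rightarrow> real^'n^'n \<Rightarrow> real^'p^'n \<Rightarrow> real^'m" where
  "mult_mu A C Y = pinv (gram A Y) *v opA A (C ** Y ** transpose Y)"

definition Smat :: "('m::finite \<Rightarrow> real^'n^'n) \<Rightarrow> real^'n^'n \<Rightarrow> real^'p^'n \<Rightarrow> real^'n^'n" where
  "Smat A C Y = C - opA_adj A (mult_mu A C Y)"

definition second_order_critical ::
  "('m::finite \<Rightarrow> real^'n^'n) \<Rightarrow> real^'n^'n \<Rightarrow> real^'p^'n \<Rightarrow> bool" where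
  "second_order_critical A C Y \<longleftrightarrow>
     Smat A C Y ** Y = 0 \<and>
     (\<forall>Yd\<in>tangent_space A Y. 0 \<le> frob Yd (Smat A C Y ** Yd))"

definition face_of_point :: "('a::euclidean_space) set \<Rightarrow> 'a \<Rightarrow> 'a set" where
  "face_of_point S X = (THE F. F face_of S \<and> X \<in> rel_interior F)"

definition charpoly :: "real^'n^'n \<Rightarrow> real poly" where
  "charpoly M = det (\<chi> i j. (if i = j then [:0, 1:] else 0) - [:M$i$j:])"

definition num_neg_eig :: "real^'n^'n \<Rightarrow> nat" where
  "num_neg_eig M = (\<Sum>t\<in>{t. t < 0 \<and> poly (charpoly M) t = 0}. order t (charpoly M))"

end

theory Submission
  imports Defs
begin

text \<open>
  Let \<open>S = S(Y)\<close> have \<open>k\<close> negative eigenvalues, with orthonormal eigenvectors \<open>u\<^sub>i\<close>.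
  Since \<open>S Y = 0\<close>, every \<open>u\<^sub>i\<close> is orthogonal to the columns of \<open>Y\<close>, so the \<open>k p\<close>
  matrices \<open>u\<^sub>i e\<^sub>j\<^sup>T\<close> span a space \<open>E\<close> on which \<open>Z \<mapsto> \<langle>Z, S Z\<rangle>\<close> is negative
  definite and which meets \<open>R = {Y W}\<close> (of dimension \<open>p\<^sup>2\<close>, as \<open>Y\<close> has full rank) only in
  \<open>0\<close>. The tangent space \<open>T\<close> has codimension \<open>m'\<close>, so
  \<open>dim (T \<inter> (E + R)) \<ge> k p + p\<^sup>2 - m'\<close>, and second-order criticality gives
  \<open>T \<inter> (E + R) \<subseteq> T \<inter> R\<close>. The map \<open>Y W \<mapsto> Y (W + W\<^sup>T) Y\<^sup>T\<close> sends \<open>T \<inter> R\<close> into the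
  directions of the face \<open>F\<^sub>X\<close>, because \<open>X \<plusminus> \<epsilon> Y (W + W\<^sup>T) Y\<^sup>T\<close> is feasible for small
  \<open>\<epsilon>\<close>, and its kernel consists of the \<open>Y W\<close> with \<open>W\<close> skew-symmetric. Hence
  \<open>k p + p\<^sup>2 - m' \<le> dim F\<^sub>X + p (p - 1) / 2\<close>, that is \<open>k p \<le> dim F\<^sub>X - \<Delta>\<close>.
  If \<open>k = 0\<close> then \<open>S \<succeq> 0\<close>; as \<open>\<langle>S, X\<rangle> = 0\<close> and \<open>\<langle>C, Z\<rangle> = \<langle>S, Z\<rangle> + \<langle>\<mu>, b\<rangle>\<close> for every
  feasible \<open>Z\<close>, \<open>X\<close> is optimal; only the shape \<open>S = C - \<A>\<^sup>*(\<mu>)\<close> matters here, not the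
  particular multiplier \<open>\<mu>\<close>.
\<close>

section \<open>Frobenius products and matrix identities\<close>

lemma frob_eq_inner: "frob U V = U \<bullet> V"
  by (simp add: frob_def inner_vec_def)

lemma symmetric_mat_iff: "symmetric_mat M \<longleftrightarrow> (\<forall>i j. M$i$j = M$j$i)"
  unfolding symmetric_mat_def transpose_def by (auto simp: vec_eq_iff)

lemma matrix_add_rdistrib: "((A::real^'b^'a) + B) ** (C::real^'c^'b) = A ** C + B ** C"
  by (simp add: matrix_matrix_mult_def vec_eq_iff sum.distrib distrib_right)

lemma transpose_add: "transpose ((A::real^'b^'a) + B) = transpose A + transpose B"
  by (simp add: transpose_def vec_eq_iff)

lemma linear_matrix_mult_left: "linear ((**) (Y::real^'b^'a) :: real^'c^'b \<Rightarrow> _)"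
  by (rule linearI) (simp_all add: matrix_add_ldistrib matrix_scalar_ac scalar_matrix_assoc)

lemma inner_symmetric_matrix_vector:
  assumes "symmetric_mat S" shows "x \<bullet> (S *v y) = (S *v x) \<bullet> y"
  by (metis assms dot_lmul_matrix symmetric_mat_def vector_transpose_matrix)

lemma inner_symmetric_matrix_mult:
  fixes X Z :: "real^'p^'n"
  assumes "symmetric_mat S" shows "X \<bullet> (S ** Z) = (S ** X) \<bullet> Z"
proof -
  have "X \<bullet> (S ** Z) = (\<Sum>i\<in>UNIV. \<Sum>j\<in>UNIV. \<Sum>k\<in>UNIV. X$i$j * (S$i$k * Z$k$j))"
    by (simp add: inner_vec_def matrix_matrix_mult_def sum_distrib_left)
  also have "\<dots> = (\<Sum>i\<in>UNIV. \<Sum>k\<in>UNIV. \<Sum>j\<in>UNIV. X$i$j * (S$i$k * Z$k$j))"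
    by (rule sum.cong[OF refl], rule sum.swap)
  also have "\<dots> = (\<Sum>k\<in>UNIV. \<Sum>i\<in>UNIV. \<Sum>j\<in>UNIV. X$i$j * (S$i$k * Z$k$j))"
    by (rule sum.swap)
  also have "\<dots> = (\<Sum>k\<in>UNIV. \<Sum>j\<in>UNIV. \<Sum>i\<in>UNIV. X$i$j * (S$i$k * Z$k$j))"
    by (rule sum.cong[OF refl], rule sum.swap)
  also have "\<dots> = (S ** X) \<bullet> Z"
    using assms
    by (simp add: symmetric_mat_iff inner_vec_def matrix_matrix_mult_def sum_distrib_left
        sum_distrib_right mult_ac)
  finally show ?thesis .
qed

lemma frob_matrix_mult_transpose:
  fixes A :: "real^'n^'n" and P Q :: "real^'p^'n"
  shows "frob A (P ** transpose Q) = frob (A ** Q) P"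
proof -
  have "frob A (P ** transpose Q) = (\<Sum>a\<in>UNIV. \<Sum>b\<in>UNIV. \<Sum>c\<in>UNIV. A$a$b * (P$a$c * Q$b$c))"
    by (simp add: frob_def matrix_matrix_mult_def transpose_def sum_distrib_left)
  also have "\<dots> = (\<Sum>a\<in>UNIV. \<Sum>c\<in>UNIV. \<Sum>b\<in>UNIV. A$a$b * (P$a$c * Q$b$c))"
    by (rule sum.cong[OF refl], rule sum.swap)
  also have "\<dots> = frob (A ** Q) P"
    by (simp add: frob_def matrix_matrix_mult_def sum_distrib_left sum_distrib_right mult_ac)
  finally show ?thesis .
qed

lemma frob_transpose: "frob A (transpose D) = frob (transpose A) (D::real^'n^'n)"
  unfolding frob_def transpose_def by (simp, rule sum.swap)

lemma frob_opA_adj: "frob (opA_adj A v) Z = v \<bullet> opA A Z"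
proof -
  have "frob (opA_adj A v) Z = (\<Sum>i\<in>UNIV. frob (v$i *\<^sub>R A i) Z)"
    by (simp add: opA_adj_def frob_eq_inner inner_sum_left)
  then show ?thesis
    by (simp add: opA_def inner_vec_def frob_def sum_distrib_left mult.assoc)
qed

lemma symmetric_Smat:
  assumes "symmetric_mat C" and "\<forall>i. symmetric_mat (A i)"
  shows "symmetric_mat (Smat A C Y)"
  using assms by (simp add: symmetric_mat_iff Smat_def opA_adj_def sum_component)

lemma inner_congruence:
  fixes Y :: "real^'p^'n" and N :: "real^'p^'p"
  shows "x \<bullet> ((Y ** N ** transpose Y) *v x) = (transpose Y *v x) \<bullet> (N *v (transpose Y *v x))"
proof -
  have "(Y ** N ** transpose Y) *v x = Y *v (N *v (transpose Y *v x))"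
    by (simp only: matrix_vector_mul_assoc matrix_mul_assoc)
  then show ?thesis by (simp only: dot_lmul_matrix[symmetric] transpose_matrix_vector)
qed

lemma psd_mult_transpose: "psd (Y ** transpose (Y::real^'p^'n))"
  using inner_congruence[of _ Y "mat 1"]
  by (simp add: psd_def symmetric_mat_def matrix_transpose_mul)

lemma full_rank_left_inverse:
  fixes Y :: "real^'p^'n"
  assumes "rank Y = CARD('p)"
  obtains L where "L ** Y = mat 1"
  using assms full_rank_injective matrix_left_invertible_injective by blast

lemma full_rank_matrix_mult_eq_0:
  fixes Y :: "real^'p^'n" and W :: "real^'q^'p"
  assumes "rank Y = CARD('p)" and "Y ** W = 0"
  shows "W = 0"
proof -
  obtain L where "L ** Y = mat 1" using full_rank_left_inverse[OF assms(1)] .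
  then have "W = L ** (Y ** W)" by (simp add: matrix_mul_assoc)
  then show ?thesis using assms(2) by (simp add: matrix_mul_assoc)
qed

lemma full_rank_congruence_eq_0:
  fixes Y :: "real^'p^'n" and M :: "real^'p^'p"
  assumes "rank Y = CARD('p)" and "Y ** M ** transpose Y = 0"
  shows "M = 0"
proof -
  obtain L where L: "L ** Y = mat 1" using full_rank_left_inverse[OF assms(1)] .
  then have "transpose Y ** transpose L = mat 1"
    by (metis matrix_transpose_mul transpose_mat)
  then have "M = (L ** Y) ** M ** (transpose Y ** transpose L)"
    using L by simp
  then have "M = L ** (Y ** M ** transpose Y) ** transpose L"
    by (simp add: matrix_mul_assoc)
  then show ?thesis using assms(2) by (simp add: matrix_mul_assoc)
qed

section \<open>Spectral theorem for symmetric matrices\<close>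

lemma eq_0_if_linear_le_quadratic:
  fixes a K :: real
  assumes le: "\<And>t. 2 * t * a \<le> t\<^sup>2 * K" and "0 \<le> a"
  shows "a = 0"
proof (rule ccontr)
  assume "a \<noteq> 0"
  with \<open>0 \<le> a\<close> have apos: "a > 0" by simp
  define t where "t = a / (\<bar>K\<bar> + 1)"
  have tpos: "t > 0" using apos by (simp add: t_def add_pos_nonneg)
  have "2 * a \<le> t * K" using le[of t] tpos by (simp add: power2_eq_square)
  also have "\<dots> \<le> t * \<bar>K\<bar>" using tpos by (simp add: mult_left_mono)
  also have "\<dots> = a * (\<bar>K\<bar> / (\<bar>K\<bar> + 1))" by (simp add: t_def)
  also have "\<dots> \<le> a * 1" using apos by (intro mult_left_mono) auto
  finally show False using apos by simp
qed

lemma symmetric_mat_rayleigh_maximizer_eigenvector: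
  fixes S :: "real^'n^'n"
  assumes symS: "symmetric_mat S" and V: "subspace V" and inv: "\<And>x. x \<in> V \<Longrightarrow> S *v x \<in> V"
    and vV: "v \<in> V" and vv: "v \<bullet> v = 1"
    and max: "\<And>y. y \<in> V \<Longrightarrow> y \<bullet> (S *v y) \<le> (v \<bullet> (S *v v)) * (y \<bullet> y)"
  shows "S *v v = (v \<bullet> (S *v v)) *\<^sub>R v"
proof -
  define \<mu> where "\<mu> = v \<bullet> (S *v v)"
  define w where "w = S *v v - \<mu> *\<^sub>R v"
  define a where "a = w \<bullet> w"
  define c where "c = w \<bullet> (S *v w)"
  have wV: "w \<in> V" unfolding w_def by (intro subspace_diff subspace_scale V inv vV)
  have wv: "v \<bullet> w = 0" by (simp add: w_def inner_diff_right vv \<mu>_def)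
  have wSv: "w \<bullet> (S *v v) = a"
    by (simp add: w_def a_def inner_diff_left inner_diff_right wv vv \<mu>_def inner_commute)
  have vSw: "v \<bullet> (S *v w) = a"
    using inner_symmetric_matrix_vector[OF symS, of v w] wSv by (simp add: inner_commute)
  \<comment> \<open>Maximality of the Rayleigh quotient at \<open>v\<close>, tested along \<open>v + t w\<close>.\<close>
  have quadratic: "2 * t * a \<le> t\<^sup>2 * (\<mu> * a - c)" for t
  proof -
    have "(v + t *\<^sub>R w) \<bullet> (S *v (v + t *\<^sub>R w)) \<le> \<mu> * ((v + t *\<^sub>R w) \<bullet> (v + t *\<^sub>R w))"
      using max[of "v + t *\<^sub>R w"] V vV wV by (simp add: \<mu>_def subspace_add subspace_scale)
    moreover have "(v + t *\<^sub>R w) \<bullet> (S *v (v + t *\<^sub>R w)) = \<mu> + 2 * t * a + t\<^sup>2 * c"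
      using vSw wSv
      by (simp add: matrix_vector_right_distrib matrix_vector_mult_scaleR inner_add_left
          inner_add_right \<mu>_def c_def power2_eq_square algebra_simps)
    moreover have "(v + t *\<^sub>R w) \<bullet> (v + t *\<^sub>R w) = 1 + t\<^sup>2 * a"
      using wv vv
      by (simp add: inner_add_left inner_add_right a_def power2_eq_square inner_commute algebra_simps)
    ultimately have "\<mu> + 2 * t * a + t\<^sup>2 * c \<le> \<mu> * (1 + t\<^sup>2 * a)" by metis
    then show ?thesis by (simp add: algebra_simps)
  qed
  have "a = 0" using quadratic by (rule eq_0_if_linear_le_quadratic) (simp add: a_def)
  then show ?thesis by (simp add: a_def w_def \<mu>_def)
qed

lemma symmetric_mat_eigenvector_orthogonal:
  fixes S :: "real^'n^'n"
  assumes symS: "symmetric_mat S"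
    and eigB: "\<And>b. b \<in> B \<Longrightarrow> \<exists>c. S *v b = c *\<^sub>R b"
    and dimB: "dim B < DIM(real^'n)"
  obtains v where "norm v = 1" "\<And>b. b \<in> B \<Longrightarrow> b \<bullet> v = 0" "S *v v = (v \<bullet> (S *v v)) *\<^sub>R v"
proof -
  define V where "V = {x. \<forall>b\<in>B. b \<bullet> x = 0}"
  have subV: "subspace V" unfolding V_def subspace_def by (auto simp: inner_add_right)
  have invV: "S *v x \<in> V" if "x \<in> V" for x
  proof -
    have "b \<bullet> (S *v x) = 0" if "b \<in> B" for b
    proof -
      obtain c where "S *v b = c *\<^sub>R b" using eigB[OF \<open>b \<in> B\<close>] by blast
      then show ?thesis
        using inner_symmetric_matrix_vector[OF symS, of b x] \<open>x \<in> V\<close> \<open>b \<in> B\<close>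
        by (simp add: V_def)
    qed
    then show ?thesis by (simp add: V_def)
  qed
  define K where "K = sphere 0 1 \<inter> V"
  obtain x0 where x0: "x0 \<noteq> 0" "\<And>y. y \<in> span B \<Longrightarrow> orthogonal x0 y"
    using orthogonal_to_subspace_exists[OF dimB] by blast
  then have "x0 /\<^sub>R norm x0 \<in> K"
    using span_base[of _ B] by (auto simp: K_def V_def orthogonal_def inner_commute)
  then have Kne: "K \<noteq> {}" by blast
  have Kc: "compact K"
    unfolding K_def by (intro compact_Int_closed compact_sphere closed_subspace subV)
  have cont: "continuous_on K (\<lambda>x. x \<bullet> (S *v x))"
    by (intro continuous_intros linear_continuous_on matrix_vector_mul_bounded_linear)
  obtain v where vK: "v \<in> K" and vmax: "\<And>y. y \<in> K \<Longrightarrow> y \<bullet> (S *v y) \<le> v \<bullet> (S *v v)"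
    using continuous_attains_sup[OF Kc Kne cont] by blast
  have vV: "v \<in> V" and nv: "norm v = 1" using vK by (auto simp: K_def)
  have bound: "y \<bullet> (S *v y) \<le> (v \<bullet> (S *v v)) * (y \<bullet> y)" if "y \<in> V" for y
  proof (cases "y = 0")
    case False
    have "y /\<^sub>R norm y \<in> K" using False \<open>y \<in> V\<close> subV by (auto simp: K_def subspace_scale)
    then have "(y /\<^sub>R norm y) \<bullet> (S *v (y /\<^sub>R norm y)) \<le> v \<bullet> (S *v v)" by (rule vmax)
    then show ?thesis
      using False by (simp add: matrix_vector_mult_scaleR dot_square_norm field_simps power2_eq_square)
  qed simp
  show ?thesis
  proof
    show "S *v v = (v \<bullet> (S *v v)) *\<^sub>R v"
      by (rule symmetric_mat_rayleigh_maximizer_eigenvector[OF symS subV invV vV _ bound])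
        (use nv in \<open>simp_all add: dot_square_norm\<close>)
  qed (use nv vV V_def in auto)
qed

lemma orthonormal_expansion:
  fixes u :: "'i::finite \<Rightarrow> 'a::real_inner"
  assumes orth: "\<And>i j. u i \<bullet> u j = (if i = j then 1 else 0)"
    and span: "span (range u) = UNIV"
  shows "x = (\<Sum>i\<in>UNIV. (u i \<bullet> x) *\<^sub>R u i)"
proof -
  define z where "z = x - (\<Sum>i\<in>UNIV. (u i \<bullet> x) *\<^sub>R u i)"
  have "orthogonal z (u j)" for j
  proof -
    have "(\<Sum>i\<in>UNIV. (u i \<bullet> x) *\<^sub>R u i) \<bullet> u j = u j \<bullet> x"
      by (simp add: inner_sum_left orth if_distrib cong: if_cong)
    then show ?thesis
      unfolding orthogonal_def z_def inner_diff_left by (simp add: inner_commute[of x "u j"])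
  qed
  then have "orthogonal z z" using orthogonal_to_span span by blast
  then show ?thesis by (simp add: z_def orthogonal_self)
qed

lemma symmetric_mat_spanning_orthonormal_eigenvectors:
  fixes S :: "real^'n^'n"
  assumes symS: "symmetric_mat S"
  obtains B where "\<forall>b\<in>B. norm b = 1" "pairwise orthogonal B"
    "\<forall>b\<in>B. S *v b = (b \<bullet> (S *v b)) *\<^sub>R b" "span B = UNIV"
proof -
  define P where "P B \<longleftrightarrow> (\<forall>b\<in>B. norm b = 1) \<and> pairwise orthogonal B \<and>
      (\<forall>b\<in>B. S *v b = (b \<bullet> (S *v b)) *\<^sub>R b)" for B :: "(real^'n) set"
  have indep: "independent B" if "P B" for B
    using that unfolding P_def by (intro pairwise_orthogonal_independent) auto
  have "P {}" by (simp add: P_def)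
  then obtain B where PB: "P B" and Bmax: "\<And>B'. P B' \<Longrightarrow> card B' \<le> card B"
    using ex_has_greatest_nat[of P "{}" card "DIM(real^'n) + 1"]
      independent_bound[OF indep] by fastforce
  have finB: "finite B" using independent_bound[OF indep[OF PB]] by simp
  \<comment> \<open>A maximal orthonormal set of eigenvectors spans, since otherwise it could be extended.\<close>
  have "span B = UNIV"
  proof (rule ccontr)
    assume "span B \<noteq> UNIV"
    then have "dim B < DIM(real^'n)"
      using dim_eq_full dim_subset_UNIV[of B] by (metis le_neq_implies_less)
    moreover have "\<exists>c. S *v b = c *\<^sub>R b" if "b \<in> B" for b using PB that by (auto simp: P_def)
    ultimately obtain v where v: "norm v = 1" "\<And>b. b \<in> B \<Longrightarrow> b \<bullet> v = 0"
       "S *v v = (v \<bullet> (S *v v)) *\<^sub>R v"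
      using symmetric_mat_eigenvector_orthogonal[OF symS] by metis
    have vB: "v \<notin> B" using v(1) v(2)[of v] by (auto simp: dot_square_norm)
    have "P (insert v B)" using PB v unfolding P_def pairwise_insert
      by (auto simp: orthogonal_def inner_commute)
    then have "card (insert v B) \<le> card B" by (rule Bmax)
    then show False using vB finB by simp
  qed
  then show ?thesis using that PB unfolding P_def by blast
qed

lemma symmetric_mat_orthonormal_eigenbasis:
  fixes S :: "real^'n^'n"
  assumes symS: "symmetric_mat S"
  obtains u :: "'n \<Rightarrow> real^'n" and l :: "'n \<Rightarrow> real"
  where "\<And>i j. u i \<bullet> u j = (if i = j then 1 else 0)"
    "\<And>i. S *v u i = l i *\<^sub>R u i"
    "span (range u) = UNIV"
proof -
  obtain B where norm: "\<forall>b\<in>B. norm b = 1" and orth: "pairwise orthogonal B"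
    and eig: "\<forall>b\<in>B. S *v b = (b \<bullet> (S *v b)) *\<^sub>R b" and span: "span B = UNIV"
    using symmetric_mat_spanning_orthonormal_eigenvectors[OF symS] by blast
  have indep: "independent B"
    using norm orth by (intro pairwise_orthogonal_independent) auto
  then have "finite B" using independent_bound by blast
  moreover have "card B = CARD('n)"
    using dim_eq_card_independent[OF indep] span dim_eq_full[of B] by simp
  ultimately obtain h where h: "bij_betw h (UNIV::'n set) B"
    using finite_same_card_bij[of "UNIV::'n set" B] by auto
  have hB: "h i \<in> B" for i using h by (auto simp: bij_betw_def)
  have "h i \<bullet> h j = (if i = j then 1 else 0)" for i j
  proof (cases "i = j")
    case True
    then show ?thesis using norm hB[of i] by (simp add: dot_square_norm)
  next
    case False
    then have "h i \<noteq> h j" using h by (auto simp: bij_betw_def inj_on_def)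
    then show ?thesis using orth hB[of i] hB[of j] False by (auto simp: pairwise_def orthogonal_def)
  qed
  moreover have "S *v h i = (h i \<bullet> (S *v h i)) *\<^sub>R h i" for i using eig hB by blast
  moreover have "range h = B" using h by (simp add: bij_betw_def)
  ultimately show ?thesis using that[of h "\<lambda>i. h i \<bullet> (S *v h i)"] span by blast
qed

section \<open>Counting negative eigenvalues\<close>

lemma poly_det: "poly (det M) x = det (\<chi> i j. poly (M$i$j) x)"
  unfolding det_def by (simp add: poly_sum poly_prod)

lemma order_linear: "order t [:-a, 1:] = (if t = a then 1 else 0)"
proof (cases "t = a")
  case True then show ?thesis using order_power_n_n[of a 1] by simp
next
  case False then show ?thesis by (subst order_0I) auto
qed

lemma order_prod_linear:
  assumes "finite I"
  shows "order t (\<Prod>i\<in>I. [:-l i, 1:]) = card {i\<in>I. l i = t}"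
  using assms
proof (induction I rule: finite_induct)
  case empty
  then show ?case by (simp add: order_0I)
next
  case (insert j I)
  have "(\<Prod>i\<in>I. [:-l i, 1:]) \<noteq> 0" and "[:-l j, 1:] \<noteq> 0"
    using insert by (simp_all add: prod_zero_iff)
  then have "order t ([:-l j, 1:] * (\<Prod>i\<in>I. [:-l i, 1:]))
      = order t [:-l j, 1:] + order t (\<Prod>i\<in>I. [:-l i, 1:])"
    by (intro order_mult) (simp only: mult_eq_0_iff, blast)
  moreover have "{i\<in>insert j I. l i = t} = (if l j = t then insert j {i\<in>I. l i = t} else {i\<in>I. l i = t})"
    by auto
  ultimately show ?case using insert by (simp add: order_linear)
qed

lemma congruence_entry:
  fixes u :: "'n \<Rightarrow> real^'n" and M :: "real^'n^'n"
  defines "Q \<equiv> (\<chi> a b. (u b)$a)"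
  shows "(transpose Q ** M ** Q)$i$j = u i \<bullet> (M *v u j)"
proof -
  have "(transpose Q ** M ** Q)$i$j = (\<Sum>k\<in>UNIV. \<Sum>a\<in>UNIV. (u i)$a * M$a$k * (u j)$k)"
    by (simp add: Q_def matrix_matrix_mult_def transpose_def sum_distrib_right)
  also have "\<dots> = (\<Sum>a\<in>UNIV. \<Sum>k\<in>UNIV. (u i)$a * M$a$k * (u j)$k)" by (rule sum.swap)
  also have "\<dots> = u i \<bullet> (M *v u j)"
    by (simp add: inner_vec_def matrix_vector_mult_def sum_distrib_left mult_ac)
  finally show ?thesis .
qed

lemma charpoly_orthonormal_eigenbasis:
  fixes S :: "real^'n^'n" and u :: "'n \<Rightarrow> real^'n"
  assumes orth: "\<And>i j. u i \<bullet> u j = (if i = j then 1 else 0)"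
    and eig: "\<And>i. S *v u i = l i *\<^sub>R u i"
  shows "charpoly S = (\<Prod>i\<in>UNIV. [:-l i, 1:])"
proof -
  define Q where "Q = ((\<chi> a b. (u b)$a) :: real^'n^'n)"
  have "(transpose Q ** Q)$i$j = u i \<bullet> u j" for i j
    unfolding Q_def using congruence_entry[of u "mat 1" i j]
    by (simp only: matrix_mul_rid matrix_vector_mul_lid)
  then have "transpose Q ** Q = mat 1" using orth by (simp add: vec_eq_iff mat_def)
  then have detQ: "det (transpose Q) * det Q = 1" by (metis det_I det_mul)
  have "poly (charpoly S) x = poly (\<Prod>i\<in>UNIV. [:-l i, 1:]) x" for x
  proof -
    define M where "M = x *\<^sub>R mat 1 - S"
    have Mv: "M *v v = x *\<^sub>R v - S *v v" for v
      by (simp add: M_def matrix_vector_mult_diff_rdistrib scaleR_matrix_vector_assoc[symmetric])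
    have "poly (charpoly S) x = det M"
      unfolding charpoly_def poly_det by (rule arg_cong[where f=det]) (simp add: M_def vec_eq_iff mat_def)
    also have "\<dots> = det (transpose Q ** M ** Q)"
      using detQ by (simp add: det_mul algebra_simps)
    also have "transpose Q ** M ** Q = (\<chi> i j. if i = j then x - l i else 0)"
    proof -
      have "(transpose Q ** M ** Q)$i$j = (if i = j then x - l i else 0)" for i j
        using orth[of i j] by (simp add: Q_def congruence_entry Mv eig inner_diff_right)
      then show ?thesis by (simp add: vec_eq_iff)
    qed
    also have "det (\<chi> i j. if i = j then x - l i else 0) = (\<Prod>i\<in>UNIV. x - l i)"
      by (subst det_diagonal) auto
    finally show ?thesis by (simp add: poly_prod)
  qed
  then show ?thesis using poly_eq_poly_eq_iff by blast
qed

lemma num_neg_eig_orthonormal_eigenbasis: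
  fixes S :: "real^'n^'n" and u :: "'n \<Rightarrow> real^'n"
  assumes orth: "\<And>i j. u i \<bullet> u j = (if i = j then 1 else 0)"
    and eig: "\<And>i. S *v u i = l i *\<^sub>R u i"
  shows "num_neg_eig S = card {i. l i < 0}"
proof -
  have cp: "charpoly S = (\<Prod>i\<in>UNIV. [:-l i, 1:])" by (rule charpoly_orthonormal_eigenbasis[OF orth eig])
  have roots: "{t. t < 0 \<and> poly (charpoly S) t = 0} = l ` {i. l i < 0}"
    by (auto simp: cp poly_prod prod_zero_iff)
  have "num_neg_eig S = (\<Sum>t\<in>l ` {i. l i < 0}. card {i. l i = t})"
    unfolding num_neg_eig_def roots by (simp add: cp order_prod_linear)
  also have "\<dots> = (\<Sum>t\<in>l ` {i. l i < 0}. card {i\<in>{i. l i < 0}. l i = t})"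
    by (intro sum.cong refl arg_cong[where f=card]) auto
  also have "\<dots> = card {i. l i < 0}"
    using sum.image_gen[of "{i. l i < 0}" "\<lambda>_. (1::nat)" l] by simp
  finally show ?thesis .
qed

lemma psd_if_num_neg_eig_eq_0:
  fixes S :: "real^'n^'n"
  assumes symS: "symmetric_mat S" and "num_neg_eig S = 0"
  shows "psd S"
proof -
  obtain u :: "'n \<Rightarrow> real^'n" and l where orth: "\<And>i j. u i \<bullet> u j = (if i = j then 1 else 0)"
    and eig: "\<And>i. S *v u i = l i *\<^sub>R u i"
    and span: "span (range u) = UNIV"
    using symmetric_mat_orthonormal_eigenbasis[OF symS] by blast
  note exp = orthonormal_expansion[OF orth span]
  have "card {i. l i < 0} = 0" using assms num_neg_eig_orthonormal_eigenbasis[OF orth eig] by simp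
  then have lpos: "0 \<le> l i" for i by (simp add: not_less)
  have "0 \<le> x \<bullet> (S *v x)" for x
  proof -
    have "S *v x = (\<Sum>i\<in>UNIV. ((u i \<bullet> x) * l i) *\<^sub>R u i)"
      by (subst exp[of x])
        (simp add: linear_sum[OF matrix_vector_mul_linear] linear_scale[OF matrix_vector_mul_linear] eig)
    then have "x \<bullet> (S *v x) = (\<Sum>i\<in>UNIV. l i * (u i \<bullet> x)\<^sup>2)"
      by (simp add: inner_sum_right power2_eq_square inner_commute mult_ac)
    also have "\<dots> \<ge> 0" using lpos by (intro sum_nonneg) simp
    finally show ?thesis .
  qed
  then show ?thesis using symS by (simp add: psd_def)
qed

lemma frob_nonneg_if_psd:
  fixes S Z :: "real^'n^'n"
  assumes S: "psd S" and Z: "psd Z"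
  shows "0 \<le> frob S Z"
proof -
  have symS: "symmetric_mat S" using S by (simp add: psd_def)
  obtain u :: "'n \<Rightarrow> real^'n" and l where orth: "\<And>i j. u i \<bullet> u j = (if i = j then 1 else 0)"
    and eig: "\<And>i. S *v u i = l i *\<^sub>R u i"
    and span: "span (range u) = UNIV"
    using symmetric_mat_orthonormal_eigenbasis[OF symS] by blast
  note exp = orthonormal_expansion[OF orth span]
  have lpos: "0 \<le> l i" for i
  proof -
    have "l i = u i \<bullet> (S *v u i)" using orth[of i i] by (simp add: eig)
    then show ?thesis using S by (simp add: psd_def)
  qed
  have entry: "S$a$b = (\<Sum>i\<in>UNIV. l i * (u i $ a * u i $ b))" for a b
  proof -
    have "S$a$b = (S *v axis b 1)$a"
      by (simp add: matrix_vector_mult_def axis_def if_distrib[of "\<lambda>c. _ * c"] cong: if_cong)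
    also have "S *v axis b 1 = (\<Sum>i\<in>UNIV. (u i $ b * l i) *\<^sub>R u i)"
      by (subst exp[of "axis b 1"])
        (simp add: inner_axis linear_sum[OF matrix_vector_mul_linear]
          linear_scale[OF matrix_vector_mul_linear] eig)
    finally show ?thesis by (simp add: sum_component mult_ac)
  qed
  have "frob S Z = (\<Sum>a\<in>UNIV. \<Sum>b\<in>UNIV. \<Sum>i\<in>UNIV. l i * (u i $ a * (Z$a$b * u i $ b)))"
    by (simp add: frob_def entry sum_distrib_left sum_distrib_right mult_ac)
  also have "\<dots> = (\<Sum>a\<in>UNIV. \<Sum>i\<in>UNIV. \<Sum>b\<in>UNIV. l i * (u i $ a * (Z$a$b * u i $ b)))"
    by (rule sum.cong[OF refl], rule sum.swap)
  also have "\<dots> = (\<Sum>i\<in>UNIV. \<Sum>a\<in>UNIV. \<Sum>b\<in>UNIV. l i * (u i $ a * (Z$a$b * u i $ b)))"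
    by (rule sum.swap)
  also have "\<dots> = (\<Sum>i\<in>UNIV. l i * (u i \<bullet> (Z *v u i)))"
    by (simp add: inner_vec_def matrix_vector_mult_def sum_distrib_left)
  also have "\<dots> \<ge> 0"
    using lpos Z by (intro sum_nonneg mult_nonneg_nonneg) (auto simp: psd_def)
  finally show ?thesis .
qed

section \<open>Faces of the feasible set\<close>

lemma face_of_point_rel_interior:
  fixes S :: "'a::euclidean_space set"
  assumes cS: "convex S" and xS: "x \<in> S"
  shows "face_of_point S x face_of S" and "x \<in> rel_interior (face_of_point S x)"
proof -
  \<comment> \<open>The smallest face containing \<open>x\<close> has \<open>x\<close> in its relative interior: otherwise a
      supporting hyperplane at \<open>x\<close> would cut out a smaller face.\<close>
  define F where "F = \<Inter>{F. F face_of S \<and> x \<in> F}"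
  have F: "F face_of S" unfolding F_def
    by (rule face_of_Inter) (use face_of_refl[OF cS] xS in auto)
  have xF: "x \<in> F" by (auto simp: F_def)
  have cF: "convex F" using F face_of_imp_convex by blast
  have "x \<in> rel_interior F"
  proof (rule ccontr)
    assume "x \<notin> rel_interior F"
    then obtain a where "a \<noteq> 0" and a: "\<And>y. y \<in> F \<Longrightarrow> a \<bullet> x \<le> a \<bullet> y"
        "\<And>y. y \<in> rel_interior F \<Longrightarrow> a \<bullet> x < a \<bullet> y"
      using supporting_hyperplane_rel_boundary[OF cF xF] by blast
    have "(F \<inter> {y. a \<bullet> y = a \<bullet> x}) face_of F"
      by (rule face_of_Int_supporting_hyperplane_ge[OF cF]) (use a in auto)
    then have "(F \<inter> {y. a \<bullet> y = a \<bullet> x}) face_of S" using F face_of_trans by blast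
    then have "F \<subseteq> {y. a \<bullet> y = a \<bullet> x}" using xF by (auto simp: F_def)
    moreover obtain y where "y \<in> rel_interior F"
      using rel_interior_eq_empty cF xF by blast
    ultimately show False using a(2) rel_interior_subset by fastforce
  qed
  then have "\<exists>!F. F face_of S \<and> x \<in> rel_interior F" using F face_of_eq by blast
  then have "face_of_point S x face_of S \<and> x \<in> rel_interior (face_of_point S x)"
    unfolding face_of_point_def by (rule theI')
  then show "face_of_point S x face_of S" and "x \<in> rel_interior (face_of_point S x)" by auto
qed

lemma face_of_two_sided_direction:
  assumes F: "F face_of K" and XF: "X \<in> F" and "X + D \<in> K" and "X - D \<in> K"
  shows "D \<in> span ((+) (- X) ` F)"
proof (cases "D = 0")
  case False
  have "X - D \<noteq> X + D"
  proof
    assume "X - D = X + D"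
    then have "2 *\<^sub>R D = 0" by (simp add: scaleR_2 algebra_simps)
    with False show False by simp
  qed
  moreover have "(X - D) + (X + D) = 2 *\<^sub>R X" by (simp add: scaleR_2 algebra_simps)
  then have "midpoint (X - D) (X + D) = X" by (simp add: midpoint_def)
  ultimately have "X \<in> open_segment (X - D) (X + D)" by (metis midpoint_in_open_segment)
  then have "X + D \<in> F" using face_ofD[OF F _ \<open>X - D \<in> K\<close> \<open>X + D \<in> K\<close> XF] by blast
  then have "-X + (X + D) \<in> (+) (- X) ` F" by blast
  then show ?thesis by (simp add: span_base)
qed (simp add: span_0)

lemma convex_sdp_feasible: "convex (sdp_feasible A b)"
proof (rule convexI)
  fix X Z and u v :: real
  assume X: "X \<in> sdp_feasible A b" and Z: "Z \<in> sdp_feasible A b"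
    and uv: "0 \<le> u" "0 \<le> v" "u + v = 1"
  have "opA A (u *\<^sub>R X + v *\<^sub>R Z) = u *\<^sub>R opA A X + v *\<^sub>R opA A Z"
    by (simp add: opA_def vec_eq_iff frob_eq_inner inner_add_right)
  also have "\<dots> = b" using X Z uv by (simp add: sdp_feasible_def flip: scaleR_add_left)
  finally have "opA A (u *\<^sub>R X + v *\<^sub>R Z) = b" .
  moreover have "0 \<le> x \<bullet> ((u *\<^sub>R X + v *\<^sub>R Z) *v x)" for x
    using X Z uv
    by (simp add: sdp_feasible_def psd_def matrix_vector_mult_add_rdistrib inner_add_right
        flip: scaleR_matrix_vector_assoc)
  ultimately show "u *\<^sub>R X + v *\<^sub>R Z \<in> sdp_feasible A b"
    using X Z by (simp add: sdp_feasible_def psd_def symmetric_mat_iff)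
qed

lemma Mp_imp_sdp_feasible: "Y \<in> Mp A b \<Longrightarrow> Y ** transpose Y \<in> sdp_feasible A b"
  using psd_mult_transpose[of Y] by (simp add: sdp_feasible_def Mp_def psd_def)

lemma sdp_feasible_congruence_perturbation:
  fixes Y :: "real^'p^'n" and M :: "real^'p^'p"
  assumes Y: "Y \<in> Mp A b" and M: "symmetric_mat M"
    and cons: "\<And>i. frob (A i) (Y ** M ** transpose Y) = 0"
  obtains e where "e > 0" "Y ** transpose Y + e *\<^sub>R (Y ** M ** transpose Y) \<in> sdp_feasible A b"
    "Y ** transpose Y - e *\<^sub>R (Y ** M ** transpose Y) \<in> sdp_feasible A b"
proof -
  obtain K where K: "K > 0" "\<And>z. norm (M *v z) \<le> norm z * K"
    using bounded_linear.pos_bounded[OF matrix_vector_mul_bounded_linear[of M]] by blast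
  define e where "e = 1 / K"
  have e: "e > 0" using K by (simp add: e_def)
  have small: "e * \<bar>z \<bullet> (M *v z)\<bar> \<le> z \<bullet> z" for z
  proof -
    have "\<bar>z \<bullet> (M *v z)\<bar> \<le> norm z * (norm z * K)"
      using Cauchy_Schwarz_ineq2[of z "M *v z"] K(2)[of z] by (meson mult_left_mono norm_ge_zero order_trans)
    then have "e * \<bar>z \<bullet> (M *v z)\<bar> \<le> e * (norm z * (norm z * K))" using e by (simp add: mult_left_mono)
    also have "\<dots> = z \<bullet> z" using K by (simp add: e_def dot_square_norm power2_eq_square)
    finally show ?thesis .
  qed
  \<comment> \<open>\<open>Y Y\<^sup>T + c Y M Y\<^sup>T = Y (I + c M) Y\<^sup>T\<close> stays psd as long as \<open>\<bar>c\<bar> \<le> 1 / \<parallel>M\<parallel>\<close>.\<close>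
  have feasible: "Y ** transpose Y + c *\<^sub>R (Y ** M ** transpose Y) \<in> sdp_feasible A b"
    if c: "\<bar>c\<bar> = e" for c
  proof -
    define N where "N = mat 1 + c *\<^sub>R M"
    have XN: "Y ** transpose Y + c *\<^sub>R (Y ** M ** transpose Y) = Y ** N ** transpose Y"
      by (simp add: N_def matrix_add_ldistrib matrix_add_rdistrib matrix_scalar_ac scalar_matrix_assoc)
    have "symmetric_mat N" using M by (simp add: N_def symmetric_mat_iff mat_def)
    then have "symmetric_mat (Y ** N ** transpose Y)"
      by (simp add: symmetric_mat_def matrix_transpose_mul matrix_mul_assoc)
    moreover have "opA A (Y ** N ** transpose Y) = b"
      using Y cons unfolding XN[symmetric]
      by (simp add: Mp_def opA_def vec_eq_iff frob_eq_inner inner_add_right)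
    moreover have "0 \<le> x \<bullet> ((Y ** N ** transpose Y) *v x)" for x
    proof -
      define z where "z = transpose Y *v x"
      have "x \<bullet> ((Y ** N ** transpose Y) *v x) = z \<bullet> z + c * (z \<bullet> (M *v z))"
        unfolding inner_congruence z_def[symmetric]
        by (simp add: N_def matrix_vector_mult_add_rdistrib inner_add_right
            flip: scaleR_matrix_vector_assoc)
      moreover have "\<bar>c * (z \<bullet> (M *v z))\<bar> \<le> z \<bullet> z" using small[of z] c by (simp add: abs_mult)
      ultimately show ?thesis by linarith
    qed
    ultimately show ?thesis unfolding XN by (simp add: sdp_feasible_def psd_def)
  qed
  show ?thesis using that e feasible[of e] feasible[of "-e"] by simp
qed

lemma tangent_range_in_face_directions:
  fixes A :: "'m::finite \<Rightarrow> real^'n^'n" and Y :: "real^'p^'n" and W :: "real^'p^'p"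
  defines "X \<equiv> Y ** transpose Y"
  assumes symA: "\<forall>i. symmetric_mat (A i)" and Y: "Y \<in> Mp A b"
    and W: "Y ** W \<in> tangent_space A Y"
  shows "Y ** (transpose W + W) ** transpose Y \<in> span ((+) (- X) ` face_of_point (sdp_feasible A b) X)"
proof -
  define M where "M = transpose W + W"
  have M: "symmetric_mat M" by (simp add: M_def symmetric_mat_def transpose_add add.commute)
  have cons: "frob (A i) (Y ** M ** transpose Y) = 0" for i
  proof -
    have "frob (A i) (Y ** W ** transpose Y) = 0"
      using W frob_matrix_mult_transpose[of "A i" "Y ** W" Y] by (simp add: tangent_space_def)
    moreover have "Y ** transpose W ** transpose Y = transpose (Y ** W ** transpose Y)"
      by (simp add: matrix_transpose_mul matrix_mul_assoc)
    ultimately show ?thesis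
      using symA by (simp add: M_def matrix_add_ldistrib matrix_add_rdistrib frob_eq_inner
          inner_add_right frob_transpose[simplified frob_eq_inner] symmetric_mat_def)
  qed
  have X: "X \<in> sdp_feasible A b" unfolding X_def using Y by (rule Mp_imp_sdp_feasible)
  note face = face_of_point_rel_interior[OF convex_sdp_feasible X]
  obtain e where e: "e > 0" "X + e *\<^sub>R (Y ** M ** transpose Y) \<in> sdp_feasible A b"
    "X - e *\<^sub>R (Y ** M ** transpose Y) \<in> sdp_feasible A b"
    using sdp_feasible_congruence_perturbation[OF Y M cons] unfolding X_def by blast
  have "e *\<^sub>R (Y ** M ** transpose Y) \<in> span ((+) (- X) ` face_of_point (sdp_feasible A b) X)"
    using face_of_two_sided_direction[OF face(1) _ e(2,3)] face(2) rel_interior_subset by blast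
  then have "(1 / e) *\<^sub>R (e *\<^sub>R (Y ** M ** transpose Y))
      \<in> span ((+) (- X) ` face_of_point (sdp_feasible A b) X)"
    by (rule span_mul)
  then show ?thesis using e(1) by (simp add: M_def)
qed

section \<open>Dimension counts\<close>

lemma card_less_pairs:
  fixes f :: "'a::finite \<Rightarrow> nat"
  assumes "inj f"
  shows "2 * card {r. f (fst r) < f (snd r)} + CARD('a) = CARD('a) * CARD('a)"
proof -
  define R where "R = {r::'a \<times> 'a. f (fst r) < f (snd r)}"
  define D where "D = range (\<lambda>a::'a. (a, a))"
  have U: "(UNIV :: ('a \<times> 'a) set) = (R \<union> prod.swap ` R) \<union> D"
    using assms by (auto simp: R_def D_def image_iff inj_eq)
  have "R \<inter> prod.swap ` R = {}" "(R \<union> prod.swap ` R) \<inter> D = {}"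
    by (auto simp: R_def D_def)
  then have "card ((R \<union> prod.swap ` R) \<union> D) = card R + card (prod.swap ` R) + card D"
    by (simp add: card_Un_disjoint)
  then have "CARD('a \<times> 'a) = card R + card (prod.swap ` R) + card D"
    by (simp only: U[symmetric])
  moreover have "card (prod.swap ` R) = card R" by (rule card_image) simp
  moreover have "card D = CARD('a)" by (simp add: D_def card_image inj_on_def)
  ultimately show ?thesis by (simp add: R_def)
qed

lemma dim_skew_symmetric:
  "2 * dim {W::real^'p^'p. transpose W = - W} + CARD('p) \<le> CARD('p) * CARD('p)"
proof -
  define R where "R = {r::'p \<times> 'p. to_nat (fst r) < to_nat (snd r)}"
  define E where "E r = ((\<chi> a b. (if r = (a, b) then 1 else 0) - (if r = (b, a) then 1 else 0)) :: real^'p^'p)"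
    for r
  \<comment> \<open>A skew-symmetric matrix is determined by its entries above the diagonal.\<close>
  have "W \<in> span (E ` R)" if skew: "transpose W = - W" for W :: "real^'p^'p"
  proof -
    have sk: "W$b$a = - W$a$b" for a b
      using arg_cong[OF skew, of "\<lambda>M. M$a$b"] by (simp add: transpose_def)
    have "(\<Sum>r\<in>R. W$(fst r)$(snd r) *\<^sub>R E r)$a$b = W$a$b" for a b
    proof -
      have "(\<Sum>r\<in>R. W$(fst r)$(snd r) *\<^sub>R E r)$a$b
          = (if (a, b) \<in> R then W$a$b else 0) - (if (b, a) \<in> R then W$b$a else 0)"
        by (simp add: E_def right_diff_distrib sum_subtractf if_distrib[of "\<lambda>t. _ * t"] cong: if_cong)
      also have "\<dots> = W$a$b"
        using sk[of a b] sk[of a a] inj_to_nat[where 'a='p]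
        by (cases "to_nat a" "to_nat b" rule: linorder_cases) (auto simp: R_def inj_eq)
      finally show ?thesis .
    qed
    then have "W = (\<Sum>r\<in>R. W$(fst r)$(snd r) *\<^sub>R E r)" by (simp add: vec_eq_iff)
    also have "\<dots> \<in> span (E ` R)" by (intro span_sum span_scale span_base) auto
    finally show ?thesis .
  qed
  then have "dim {W::real^'p^'p. transpose W = - W} \<le> card (E ` R)"
    by (intro dim_le_card) auto
  also have "\<dots> \<le> card R" by (rule card_image_le) simp
  finally show ?thesis using card_less_pairs[OF inj_to_nat, where 'a='p] by (simp add: R_def)
qed

lemma dim_le_dim_image_plus_kernel:
  fixes f :: "'a::euclidean_space \<Rightarrow> 'b::euclidean_space"
  assumes f: "linear f" and H: "subspace H"
  shows "dim H \<le> dim (f ` H) + dim {x \<in> H. f x = 0}"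
proof -
  define K where "K = {x \<in> H. f x = 0}"
  define H' where "H' = {y \<in> H. \<forall>x\<in>K. orthogonal x y}"
  have K: "subspace K"
    unfolding K_def using subspace_inter[OF H linear_subspace_kernel[OF f]] by (simp add: Int_def)
  have H': "subspace H'"
    unfolding H'_def subspace_def using H by (auto simp: subspace_def orthogonal_clauses)
  have "inj_on f (span H')"
  proof (rule inj_onI)
    fix y z assume "y \<in> span H'" "z \<in> span H'" and "f y = f z"
    moreover have "span H' = H'" using H' by (simp add: span_eq_iff)
    ultimately have "y - z \<in> H'" "f (y - z) = 0" using H' by (simp_all add: subspace_diff linear_diff[OF f])
    then have "orthogonal (y - z) (y - z)" by (auto simp: H'_def K_def)
    then show "y = z" by (simp add: orthogonal_self)
  qed
  then have "dim H' = dim (f ` H')" using dim_image_eq[OF f] by metis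
  also have "\<dots> \<le> dim (f ` H)" by (rule dim_subset) (auto simp: H'_def)
  finally have "dim H' \<le> dim (f ` H)" .
  moreover have "dim H' + dim K = dim H"
    unfolding H'_def by (rule dim_subspace_orthogonal_to_vectors[OF K H]) (auto simp: K_def)
  ultimately show ?thesis by (simp add: K_def)
qed

lemma dim_range_matrix_mult_full_rank:
  fixes Y :: "real^'p^'n"
  assumes "rank Y = CARD('p)"
  shows "dim (range (\<lambda>W::real^'q^'p. Y ** W)) = CARD('p) * CARD('q)"
proof -
  have "inj_on ((**) Y) (span (UNIV :: (real^'q^'p) set))"
  proof (rule inj_onI)
    fix W W' :: "real^'q^'p" assume "Y ** W = Y ** W'"
    then have "Y ** (W - W') = 0" by (simp add: linear_diff[OF linear_matrix_mult_left])
    then show "W = W'" using full_rank_matrix_mult_eq_0[OF assms, of "W - W'"] by simp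
  qed
  then have "dim (range (\<lambda>W::real^'q^'p. Y ** W)) = dim (UNIV :: (real^'q^'p) set)"
    by (rule dim_image_eq[OF linear_matrix_mult_left])
  then show ?thesis by simp
qed

lemma dim_tangent_space:
  fixes A :: "'m::finite \<Rightarrow> real^'n^'n" and Y :: "real^'p^'n"
  shows "dim (tangent_space A Y) + dim (span_AY A Y) = CARD('n) * CARD('p)"
proof -
  have "tangent_space A Y = {Z. \<forall>X\<in>span_AY A Y. orthogonal X Z}"
  proof (intro set_eqI iffI)
    fix Z assume "Z \<in> tangent_space A Y"
    then have "orthogonal Z X" if "X \<in> range (\<lambda>i. A i ** Y)" for X
      using that by (auto simp: tangent_space_def frob_eq_inner orthogonal_def inner_commute)
    then show "Z \<in> {Z. \<forall>X\<in>span_AY A Y. orthogonal X Z}"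
      unfolding span_AY_def using orthogonal_to_span orthogonal_commute by blast
  qed (auto simp: tangent_space_def span_AY_def frob_eq_inner orthogonal_def span_base)
  moreover have "dim {Z \<in> UNIV. \<forall>X\<in>span_AY A Y. orthogonal X Z} + dim (span_AY A Y)
      = dim (UNIV :: (real^'p^'n) set)"
    by (rule dim_subspace_orthogonal_to_vectors) (simp_all add: span_AY_def)
  ultimately show ?thesis by simp
qed

lemma dim_range_symmetrized_kernel:
  fixes Y :: "real^'p^'n"
  assumes rankY: "rank Y = CARD('p)"
  shows "dim {Z \<in> range (\<lambda>W::real^'p^'p. Y ** W). Y ** transpose Z + Z ** transpose Y = 0}
    \<le> dim {W::real^'p^'p. transpose W = - W}"
proof -
  have "{Z \<in> range (\<lambda>W::real^'p^'p. Y ** W). Y ** transpose Z + Z ** transpose Y = 0}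
      \<subseteq> (\<lambda>W. Y ** W) ` {W::real^'p^'p. transpose W = - W}"
  proof
    fix Z assume "Z \<in> {Z \<in> range (\<lambda>W::real^'p^'p. Y ** W). Y ** transpose Z + Z ** transpose Y = 0}"
    then obtain W :: "real^'p^'p" where Z: "Z = Y ** W" "Y ** transpose Z + Z ** transpose Y = 0"
      by auto
    then have "Y ** (transpose W + W) ** transpose Y = 0"
      by (simp add: matrix_transpose_mul matrix_mul_assoc matrix_add_ldistrib matrix_add_rdistrib)
    then have "transpose W = - W"
      using full_rank_congruence_eq_0[OF rankY] by (simp add: eq_neg_iff_add_eq_0)
    then show "Z \<in> (\<lambda>W. Y ** W) ` {W. transpose W = - W}" using Z by blast
  qed
  then have "dim {Z \<in> range (\<lambda>W::real^'p^'p. Y ** W). Y ** transpose Z + Z ** transpose Y = 0}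
      \<le> dim ((\<lambda>W. Y ** W) ` {W::real^'p^'p. transpose W = - W})"
    by (rule dim_subset)
  also have "\<dots> \<le> dim {W::real^'p^'p. transpose W = - W}"
    by (rule dim_image_le[OF linear_matrix_mult_left])
  finally show ?thesis .
qed

definition single_column :: "real^'n \<Rightarrow> 'p \<Rightarrow> real^'p^'n" where
  "single_column v j = (\<chi> a c. if c = j then v$a else 0)"

lemma inner_single_column_left: "single_column v j \<bullet> M = (\<Sum>a\<in>UNIV. v$a * M$a$j)"
  by (simp add: single_column_def inner_vec_def if_distrib[of "\<lambda>t. t * _"] cong: if_cong)

lemma inner_single_column: "single_column v j \<bullet> single_column w j' = (if j = j' then v \<bullet> w else 0)"
  by (simp add: inner_single_column_left single_column_def inner_vec_def)
    (simp add: if_distrib[of "\<lambda>t. _ * t"] cong: if_cong)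

lemma matrix_mult_single_column: "S ** single_column v j = single_column (S *v v) j"
  by (simp add: vec_eq_iff single_column_def matrix_matrix_mult_def matrix_vector_mult_def
      if_distrib[of "\<lambda>t. _ * t"] cong: if_cong)

lemma single_column_scaleR: "single_column (c *\<^sub>R v) j = c *\<^sub>R single_column v j"
  by (simp add: vec_eq_iff single_column_def)

lemma inner_single_column_matrix_mult:
  fixes Y :: "real^'p^'n" and W :: "real^'q^'p"
  assumes "v v* Y = 0" shows "single_column v j \<bullet> (Y ** W) = 0"
proof -
  have "single_column v j \<bullet> (Y ** W) = (\<Sum>a\<in>UNIV. \<Sum>b\<in>UNIV. v$a * (Y$a$b * W$b$j))"
    by (simp add: inner_single_column_left matrix_matrix_mult_def sum_distrib_left)
  also have "\<dots> = (\<Sum>b\<in>UNIV. \<Sum>a\<in>UNIV. v$a * (Y$a$b * W$b$j))" by (rule sum.swap)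
  also have "\<dots> = (\<Sum>b\<in>UNIV. (v v* Y)$b * W$b$j)"
    by (simp add: vector_matrix_mult_def sum_distrib_right mult.assoc)
  finally show ?thesis using assms by simp
qed

lemma inner_negative_on_span_of_eigenvectors:
  fixes Os :: "'a::real_inner set"
  assumes fin: "finite Os" and norm: "\<And>e. e \<in> Os \<Longrightarrow> e \<bullet> e = 1"
    and orth: "\<And>e e'. e \<in> Os \<Longrightarrow> e' \<in> Os \<Longrightarrow> e \<noteq> e' \<Longrightarrow> e \<bullet> e' = 0"
    and f: "linear f" and eig: "\<And>e. e \<in> Os \<Longrightarrow> f e = \<mu> e *\<^sub>R e"
    and neg: "\<And>e. e \<in> Os \<Longrightarrow> \<mu> e < 0"
    and x: "x \<in> span Os" and "x \<noteq> 0"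
  shows "x \<bullet> f x < 0"
proof -
  obtain c where xc: "x = (\<Sum>e\<in>Os. c e *\<^sub>R e)" using x span_finite[OF fin] by auto
  have coeff: "x \<bullet> e = c e" if "e \<in> Os" for e
  proof -
    have "x \<bullet> e = (\<Sum>e'\<in>Os. if e' = e then c e' else 0)"
      unfolding xc inner_sum_left by (rule sum.cong) (use norm orth that in auto)
    then show ?thesis using fin that by simp
  qed
  have "f x = (\<Sum>e\<in>Os. (c e * \<mu> e) *\<^sub>R e)"
    unfolding xc using eig by (simp add: linear_sum[OF f] linear_scale[OF f] cong: sum.cong)
  then have "x \<bullet> f x = (\<Sum>e\<in>Os. (c e * \<mu> e) * (x \<bullet> e))" by (simp add: inner_sum_right)
  also have "\<dots> = (\<Sum>e\<in>Os. (c e)\<^sup>2 * \<mu> e)"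
    by (rule sum.cong) (simp_all add: coeff power2_eq_square)
  finally have "x \<bullet> f x = (\<Sum>e\<in>Os. (c e)\<^sup>2 * \<mu> e)" .
  moreover have "\<exists>e\<in>Os. c e \<noteq> 0"
  proof (rule ccontr)
    assume "\<not> (\<exists>e\<in>Os. c e \<noteq> 0)"
    then have "x = 0" unfolding xc by (intro sum.neutral) auto
    with \<open>x \<noteq> 0\<close> show False by simp
  qed
  then obtain e where e: "e \<in> Os" "c e \<noteq> 0" by blast
  ultimately have "x \<bullet> f x = (c e)\<^sup>2 * \<mu> e + (\<Sum>e'\<in>Os - {e}. (c e')\<^sup>2 * \<mu> e')"
    using fin by (simp add: sum.remove)
  moreover have "(c e)\<^sup>2 * \<mu> e < 0" using e neg[OF e(1)] by (simp add: mult_pos_neg)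
  moreover have "(\<Sum>e'\<in>Os - {e}. (c e')\<^sup>2 * \<mu> e') \<le> 0"
    by (intro sum_nonpos) (simp add: mult_nonneg_nonpos less_imp_le neg)
  ultimately show ?thesis by linarith
qed

section \<open>Second-order critical points\<close>

lemma symmetric_mat_eigenvector_annihilates:
  fixes S :: "real^'n^'n" and Y :: "real^'p^'n"
  assumes symS: "symmetric_mat S" and SY: "S ** Y = 0" and eig: "S *v u = l *\<^sub>R u" and "l \<noteq> 0"
  shows "u v* Y = 0"
proof -
  have "l *\<^sub>R (u v* Y) = (S *v u) v* Y" by (simp add: eig scaleR_vector_matrix_assoc)
  also have "\<dots> = u v* (transpose S ** Y)"
    by (metis vector_transpose_matrix vector_matrix_mul_assoc)
  also have "\<dots> = 0" using symS SY by (simp add: symmetric_mat_def)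
  finally show ?thesis using \<open>l \<noteq> 0\<close> by simp
qed

lemma negative_subspace_orthogonal_to_range:
  fixes S :: "real^'n^'n" and Y :: "real^'p^'n"
  assumes symS: "symmetric_mat S" and SY: "S ** Y = 0"
  obtains E :: "(real^'p^'n) set"
  where "subspace E" "dim E = num_neg_eig S * CARD('p)"
    "\<And>Z. Z \<in> E \<Longrightarrow> Z \<noteq> 0 \<Longrightarrow> Z \<bullet> (S ** Z) < 0"
    "\<And>Z W. Z \<in> E \<Longrightarrow> Z \<bullet> (Y ** (W::real^'p^'p)) = 0"
proof -
  obtain u :: "'n \<Rightarrow> real^'n" and l where orth: "\<And>i j. u i \<bullet> u j = (if i = j then 1 else 0)"
    and eig: "\<And>i. S *v u i = l i *\<^sub>R u i"
    using symmetric_mat_orthonormal_eigenbasis[OF symS] by metis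
  define N where "N = {i. l i < 0}"
  define col where "col = (\<lambda>(i, j). single_column (u i) j :: real^'p^'n)"
  define Os where "Os = col ` (N \<times> UNIV)"
  have col_inner: "col r \<bullet> col r' = (if r = r' then 1 else 0)" for r r'
    by (auto simp: col_def inner_single_column orth split: prod.splits)
  have norm: "e \<bullet> e = 1" if "e \<in> Os" for e using that col_inner by (auto simp: Os_def)
  have orthogonal: "e \<bullet> e' = 0" if "e \<in> Os" "e' \<in> Os" "e \<noteq> e'" for e e'
    using that col_inner by (auto simp: Os_def)
  have "inj col" by (rule injI) (metis col_inner zero_neq_one)
  then have "card Os = card N * CARD('p)"
    by (simp add: Os_def card_image inj_on_subset card_cartesian_product)
  moreover have "independent Os"
    using norm[of 0] orthogonal
    by (intro pairwise_orthogonal_independent) (auto simp: pairwise_def orthogonal_def)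
  ultimately have "dim (span Os) = num_neg_eig S * CARD('p)"
    by (simp add: dim_eq_card_independent num_neg_eig_orthonormal_eigenbasis[OF orth eig] N_def)
  moreover have "Z \<bullet> (S ** Z) < 0" if "Z \<in> span Os" "Z \<noteq> 0" for Z
  proof (rule inner_negative_on_span_of_eigenvectors[OF _ norm orthogonal linear_matrix_mult_left _ _ that])
    show "S ** e = (\<lambda>e. e \<bullet> (S ** e)) e *\<^sub>R e" "(\<lambda>e. e \<bullet> (S ** e)) e < 0" if "e \<in> Os" for e
      using that col_inner[of "(i, j)" "(i, j)" for i j]
      by (auto simp: Os_def col_def N_def matrix_mult_single_column eig single_column_scaleR)
  qed (simp add: Os_def)
  moreover have "Z \<bullet> (Y ** W) = 0" if "Z \<in> span Os" for Z and W :: "real^'p^'p"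
  proof -
    have "u i v* Y = 0" if "i \<in> N" for i
      using symmetric_mat_eigenvector_annihilates[OF symS SY eig] that by (simp add: N_def)
    then have "orthogonal e (Y ** W)" if "e \<in> Os" for e
      using that by (auto simp: Os_def col_def orthogonal_def intro: inner_single_column_matrix_mult)
    then show ?thesis
      using orthogonal_to_span[OF \<open>Z \<in> span Os\<close>, of "Y ** W"]
      by (simp add: orthogonal_def inner_commute)
  qed
  ultimately show ?thesis using that[of "span Os"] by simp
qed

lemma dim_tangent_inter_range_lower_bound:
  fixes S :: "real^'n^'n" and Y :: "real^'p^'n"
  assumes symS: "symmetric_mat S" and SY: "S ** Y = 0" and rankY: "rank Y = CARD('p)"
    and T: "subspace T" and nonneg: "\<And>Z. Z \<in> T \<Longrightarrow> 0 \<le> Z \<bullet> (S ** Z)"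
  shows "num_neg_eig S * CARD('p) + CARD('p) * CARD('p) + dim T
    \<le> CARD('n) * CARD('p) + dim (T \<inter> range (\<lambda>W::real^'p^'p. Y ** W))"
proof -
  define R where "R = range (\<lambda>W::real^'p^'p. Y ** W)"
  obtain E where E: "subspace E" "dim E = num_neg_eig S * CARD('p)"
    and neg: "\<And>Z. Z \<in> E \<Longrightarrow> Z \<noteq> 0 \<Longrightarrow> Z \<bullet> (S ** Z) < 0"
    and orth: "\<And>Z W. Z \<in> E \<Longrightarrow> Z \<bullet> (Y ** (W::real^'p^'p)) = 0"
    using negative_subspace_orthogonal_to_range[OF symS SY] by metis
  define ER where "ER = {x + y |x y. x \<in> E \<and> y \<in> R}"
  have R: "subspace R" unfolding R_def by (rule linear_subspace_image[OF linear_matrix_mult_left subspace_UNIV])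
  have ER: "subspace ER" unfolding ER_def by (rule subspace_sums[OF E(1) R])
  have "E \<inter> R \<subseteq> {0}"
  proof
    fix Z assume "Z \<in> E \<inter> R"
    then obtain W where "Z \<in> E" "Z = Y ** W" by (auto simp: R_def)
    then have "Z \<bullet> Z = 0" using orth[of Z W] by simp
    then show "Z \<in> {0}" by simp
  qed
  then have "dim (E \<inter> R) = 0" using dim_subset[of "E \<inter> R" "{0}"] by simp
  moreover have "dim ER + dim (E \<inter> R) = dim E + dim R"
    unfolding ER_def by (rule dim_sums_Int[OF E(1) R])
  ultimately have "dim ER = dim E + dim R" by linarith
  then have dimER: "dim ER = num_neg_eig S * CARD('p) + CARD('p) * CARD('p)"
    using E(2) dim_range_matrix_mult_full_rank[OF rankY, where 'q='p] by (simp add: R_def)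
  \<comment> \<open>Second-order criticality forces the component in \<open>E\<close> of a tangent vector in \<open>E + R\<close> to vanish.\<close>
  have "T \<inter> ER \<subseteq> T \<inter> R"
  proof
    fix Z assume Z: "Z \<in> T \<inter> ER"
    then obtain Z1 Z2 where Z12: "Z = Z1 + Z2" "Z1 \<in> E" "Z2 \<in> R" by (auto simp: ER_def)
    have "S ** Z2 = 0" using \<open>Z2 \<in> R\<close> SY by (auto simp: R_def matrix_mul_assoc)
    then have "Z \<bullet> (S ** Z) = Z1 \<bullet> (S ** Z1)"
      using inner_symmetric_matrix_mult[OF symS, of Z2 Z1]
      by (simp add: Z12(1) matrix_add_ldistrib inner_add_left)
    then have "Z1 = 0" using nonneg[of Z] neg[OF Z12(2)] Z by fastforce
    then show "Z \<in> T \<inter> R" using Z Z12 by simp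
  qed
  then have "dim (T \<inter> ER) \<le> dim (T \<inter> R)" by (rule dim_subset)
  moreover have "dim {x + y |x y. x \<in> T \<and> y \<in> ER} + dim (T \<inter> ER) = dim T + dim ER"
    by (rule dim_sums_Int[OF T ER])
  moreover have "dim {x + y |x y. x \<in> T \<and> y \<in> ER} \<le> CARD('n) * CARD('p)"
    using dim_subset_UNIV[of "{x + y |x y. x \<in> T \<and> y \<in> ER}"] by simp
  ultimately show ?thesis using dimER by (simp add: R_def)
qed

lemma dim_tangent_inter_range_upper_bound:
  fixes A :: "'m::finite \<Rightarrow> real^'n^'n" and Y :: "real^'p^'n"
  assumes symA: "\<forall>i. symmetric_mat (A i)" and Y: "Y \<in> Mp A b" and rankY: "rank Y = CARD('p)"
  shows "2 * int (dim (tangent_space A Y \<inter> range (\<lambda>W::real^'p^'p. Y ** W))) + CARD('p)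
    \<le> 2 * aff_dim (face_of_point (sdp_feasible A b) (Y ** transpose Y)) + CARD('p) * CARD('p)"
proof -
  define X where "X = Y ** transpose Y"
  define F where "F = face_of_point (sdp_feasible A b) X"
  define H where "H = tangent_space A Y \<inter> range (\<lambda>W::real^'p^'p. Y ** W)"
  define \<psi> where "\<psi> Z = Y ** transpose Z + Z ** transpose Y" for Z :: "real^'p^'n"
  have \<psi>: "linear \<psi>"
    by (rule linearI) (simp_all add: \<psi>_def transpose_add transpose_scalar matrix_add_ldistrib
        matrix_add_rdistrib matrix_scalar_ac scalar_matrix_assoc algebra_simps)
  have H: "subspace H"
    unfolding H_def tangent_space_def frob_eq_inner
    by (intro subspace_inter linear_subspace_image[OF linear_matrix_mult_left subspace_UNIV])
      (auto simp: subspace_def inner_add_right)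
  have "{Z \<in> H. \<psi> Z = 0}
      \<subseteq> {Z \<in> range (\<lambda>W::real^'p^'p. Y ** W). Y ** transpose Z + Z ** transpose Y = 0}"
    by (auto simp: H_def \<psi>_def)
  then have "dim {Z \<in> H. \<psi> Z = 0} \<le> dim {W::real^'p^'p. transpose W = - W}"
    by (rule order_trans[OF dim_subset dim_range_symmetrized_kernel[OF rankY]])
  moreover have "\<psi> ` H \<subseteq> span ((+) (- X) ` F)"
  proof
    fix D assume "D \<in> \<psi> ` H"
    then obtain W :: "real^'p^'p" where "Y ** W \<in> tangent_space A Y" "D = \<psi> (Y ** W)"
      by (auto simp: H_def)
    then show "D \<in> span ((+) (- X) ` F)"
      using tangent_range_in_face_directions[OF symA Y]
      by (simp add: \<psi>_def X_def F_def matrix_transpose_mul matrix_mul_assoc matrix_add_ldistrib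
          matrix_add_rdistrib)
  qed
  then have "dim (\<psi> ` H) \<le> dim ((+) (- X) ` F)"
    using dim_subset dim_span by metis
  moreover have "X \<in> F"
    using face_of_point_rel_interior(2)[OF convex_sdp_feasible Mp_imp_sdp_feasible[OF Y]]
      rel_interior_subset
    unfolding F_def X_def by blast
  then have "aff_dim F = int (dim ((+) (- X) ` F))" by (intro aff_dim_eq_dim hull_inc)
  moreover note dim_le_dim_image_plus_kernel[OF \<psi> H] dim_skew_symmetric[where 'p='p]
  ultimately have "int (2 * dim H + CARD('p)) \<le> 2 * aff_dim F + int (CARD('p) * CARD('p))"
    by linarith
  then show ?thesis by (simp add: H_def F_def X_def)
qed

lemma num_neg_eig_Smat_bound:
  fixes A :: "'m::finite \<Rightarrow> real^'n^'n" and C :: "real^'n^'n" and Y :: "real^'p^'n"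
  assumes symA: "\<forall>i. symmetric_mat (A i)" and symC: "symmetric_mat C"
    and Y: "Y \<in> Mp A b" and crit: "second_order_critical A C Y" and rankY: "rank Y = CARD('p)"
  shows "real (num_neg_eig (Smat A C Y)) * real CARD('p)
    \<le> real_of_int (aff_dim (face_of_point (sdp_feasible A b) (Y ** transpose Y)))
      - (real CARD('p) * (real CARD('p) + 1) / 2 - real (dim (span_AY A Y)))"
proof -
  have T: "subspace (tangent_space A Y)"
    by (auto simp: subspace_def tangent_space_def frob_eq_inner inner_add_right)
  have "num_neg_eig (Smat A C Y) * CARD('p) + CARD('p) * CARD('p) + dim (tangent_space A Y)
      \<le> CARD('n) * CARD('p) + dim (tangent_space A Y \<inter> range (\<lambda>W::real^'p^'p. Y ** W))"
    using crit
    by (intro dim_tangent_inter_range_lower_bound[OF symmetric_Smat[OF symC symA] _ rankY T])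
      (auto simp: second_order_critical_def frob_eq_inner)
  then have "2 * int (num_neg_eig (Smat A C Y) * CARD('p)) + int (CARD('p) * CARD('p) + CARD('p))
      \<le> 2 * int (dim (span_AY A Y)) + 2 * aff_dim (face_of_point (sdp_feasible A b) (Y ** transpose Y))"
    using dim_tangent_space[of A Y] dim_tangent_inter_range_upper_bound[OF symA Y rankY] by linarith
  then have "real_of_int (2 * int (num_neg_eig (Smat A C Y) * CARD('p)) + int (CARD('p) * CARD('p) + CARD('p)))
      \<le> real_of_int (2 * int (dim (span_AY A Y))
        + 2 * aff_dim (face_of_point (sdp_feasible A b) (Y ** transpose Y)))"
    by (simp only: of_int_le_iff)
  then show ?thesis by (simp add: field_simps)
qed

lemma global_optimal_if_psd_Smat:
  fixes A :: "'m::finite \<Rightarrow> real^'n^'n" and Y :: "real^'p^'n"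
  assumes psd: "psd (Smat A C Y)" and SY: "Smat A C Y ** Y = 0" and Y: "Y \<in> Mp A b"
  shows "\<forall>X'\<in>sdp_feasible A b. frob C (Y ** transpose Y) \<le> frob C X'"
    and "\<forall>Y'::real^'p^'n\<in>Mp A b. frob (C ** Y) Y \<le> frob (C ** Y') Y'"
proof -
  have shift: "frob C Z = frob (Smat A C Y) Z + mult_mu A C Y \<bullet> b" if "Z \<in> sdp_feasible A b" for Z
  proof -
    have "frob (Smat A C Y) Z = frob C Z - frob (opA_adj A (mult_mu A C Y)) Z"
      by (simp add: Smat_def frob_eq_inner inner_diff_left)
    then show ?thesis using that by (simp add: frob_opA_adj sdp_feasible_def)
  qed
  have "frob (Smat A C Y) (Y ** transpose Y) = 0"
    using frob_matrix_mult_transpose[of "Smat A C Y" Y Y] SY by (simp add: frob_def)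
  moreover have "0 \<le> frob (Smat A C Y) X'" if "X' \<in> sdp_feasible A b" for X'
    using that by (intro frob_nonneg_if_psd[OF psd]) (simp add: sdp_feasible_def)
  ultimately show sdp: "\<forall>X'\<in>sdp_feasible A b. frob C (Y ** transpose Y) \<le> frob C X'"
    using shift Mp_imp_sdp_feasible[OF Y] by fastforce
  show "\<forall>Y'::real^'p^'n\<in>Mp A b. frob (C ** Y) Y \<le> frob (C ** Y') Y'"
  proof
    fix Y' :: "real^'p^'n" assume "Y' \<in> Mp A b"
    then have "frob C (Y ** transpose Y) \<le> frob C (Y' ** transpose Y')"
      using sdp Mp_imp_sdp_feasible by blast
    then show "frob (C ** Y) Y \<le> frob (C ** Y') Y'" by (simp add: frob_matrix_mult_transpose)
  qed
qed

theorem theorem4: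
  fixes A :: "'m::finite \<Rightarrow> real^'n::finite^'n"
    and b :: "real^'m"
    and C :: "real^'n^'n"
    and Y :: "real^'p::finite^'n"
  assumes symA: "\<forall>i. symmetric_mat (A i)"
    and symC: "symmetric_mat C"
    and nonempty: "sdp_feasible A b \<noteq> {}"
    and assm1: "assumption1 A b TYPE('p)"
    and Y_in: "Y \<in> Mp A b"
    and crit: "second_order_critical A C Y"
    and rankY: "rank Y = CARD('p)"
  shows "let X = Y ** transpose Y;
             p = real CARD('p);
             m' = real (dim (span_AY A Y));
             \<Delta> = p * (p + 1) / 2 - m';
             dF = real_of_int (aff_dim (face_of_point (sdp_feasible A b) X));
             S = Smat A C Y
         in int (num_neg_eig S) \<le> \<lfloor>(dF - \<Delta>) / p\<rfloor>
            \<and> (dF < \<Delta> + p \<longrightarrow>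
                 psd S
               \<and> (\<forall>X'\<in>sdp_feasible A b. frob C X \<le> frob C X')
               \<and> (\<forall>Y'::real^'p^'n\<in>Mp A b. frob (C ** Y) Y \<le> frob (C ** Y') Y'))"
proof -
  define S where "S = Smat A C Y"
  define p where "p = real CARD('p)"
  define \<Delta> where "\<Delta> = p * (p + 1) / 2 - real (dim (span_AY A Y))"
  define dF where "dF = real_of_int (aff_dim (face_of_point (sdp_feasible A b) (Y ** transpose Y)))"
  have neg_bound: "real (num_neg_eig S) * p \<le> dF - \<Delta>"
    unfolding S_def p_def \<Delta>_def dF_def by (rule num_neg_eig_Smat_bound[OF symA symC Y_in crit rankY])
  have "p > 0" by (simp add: p_def)
  with neg_bound have bound: "int (num_neg_eig S) \<le> \<lfloor>(dF - \<Delta>) / p\<rfloor>"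
    by (simp add: le_floor_iff pos_le_divide_eq)
  have optimal: "psd S \<and> (\<forall>X'\<in>sdp_feasible A b. frob C (Y ** transpose Y) \<le> frob C X')
      \<and> (\<forall>Y'::real^'p^'n\<in>Mp A b. frob (C ** Y) Y \<le> frob (C ** Y') Y')"
    if "dF < \<Delta> + p"
  proof -
    have "real (num_neg_eig S) * p < 1 * p" using neg_bound that by simp
    then have "num_neg_eig S = 0" using \<open>p > 0\<close> by (simp only: mult_less_cancel_right) simp
    then have "psd S"
      using psd_if_num_neg_eig_eq_0[OF symmetric_Smat[OF symC symA]] by (simp add: S_def)
    moreover have "S ** Y = 0" using crit by (simp add: second_order_critical_def S_def)
    ultimately show ?thesis using global_optimal_if_psd_Smat[OF _ _ Y_in] by (simp add: S_def)
  qed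
  show ?thesis
    unfolding Let_def p_def[symmetric] \<Delta>_def[symmetric] dF_def[symmetric] S_def[symmetric]
    using bound optimal by blast
qed

end
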